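(* Let $m\ge 2$ and let $x=(x_1,\dots,x_m)$ be a sequence of positive integers in which at most one $x_i$ equals $1$. Then $|\textsf{L-NCN}(x)|=\left(\sum_{i=1}^m x_i-1\right)_{m-2}$.
   Context: $(a)_b=a(a-1)\cdots(a-b+1)$ denotes the falling factorial (with $(a)_0=1$). For a sequence $x=(x_1,\dots,x_t)$ of positive integers with sum $N$, $\textsf{L-NC}(x)$ is the set of words $w_1\cdots w_N$ over $[t]$ with exactly $x_i$ occurrences of each letter $i$ and no indices $a<b<c<d$, letters $i\neq j$ with $w_a=w_c=i$, $w_b=w_d=j$ (labeled noncrossing partitions of type $x$). $\textsf{L-NCN}(x)$ is the set of equivalence classes of elements of $\textsf{L-NC}(x)$ under cyclic rotation of words (labeled noncrossing necklaces of type $x$). *)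

theory Defs
  imports Main
begin

definition falling_fact :: "nat \<Rightarrow> nat \<Rightarrow> nat" where
  "falling_fact a b = (\<Prod>i<b. (a - i))"

definition noncrossing :: "nat list \<Rightarrow> bool" where
  "noncrossing w \<longleftrightarrow> \<not> (\<exists>a b c d. a < b \<and> b < c \<and> c < d \<and> d < length w \<and>
      w ! a = w ! c \<and> w ! b = w ! d \<and> w ! a \<noteq> w ! b)"

text \<open>L-NC(x) for x = (x_1,...,x_t) given as a list: words over the alphabet {1..t}
  containing exactly x_i occurrences of the letter i, which are noncrossing.
  (The length is then automatically the sum N of the x_i.)\<close>
definition LNC :: "nat list \<Rightarrow> nat list set" where
  "LNC x = {w. set w \<subseteq> {1..length x} \<and> length w = sum_list x \<and>
              (\<forall>i\<in>{1..length x}. count_list w i = x ! (i - 1)) \<and> noncrossing w}"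

definition LNCN :: "nat list \<Rightarrow> nat list set set" where
  "LNCN x = (\<lambda>w. {rotate k w | k. True}) ` LNC x"

end

theory Submission
  imports Defs "HOL-Library.Sublist"
begin

text \<open>
  Prepend an extra letter 0 to the words of L-NC(x). More generally, the noncrossing words that
  begin with 0, contain c zeros and g(j) copies of each further letter j in S number
  c * (g(S) + c - 1)_(|S| - 1), where g(S) is the sum of the g(j). This follows by induction
  from the recursion obtained by looking at the letter after the leading 0: if it is 0 (or
  absent), delete the leading 0; if it is j, noncrossingness forces every j to precede every
  later 0, so deleting the leading 0 and relabelling all j as 0 is a bijection onto the words
  over S - {j} with c - 1 + g(j) zeros. For c = 1 this gives |L-NC(x)| = (N)_(m-1).

  A noncrossing word is never a proper power z^n, since two distinct letters of z cross in z z.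
  So for m >= 2 no word of L-NC(x) is fixed by a nontrivial rotation, every rotation class has
  exactly N elements, and |L-NCN(x)| = (N)_(m-1) / N = (N-1)_(m-2).
\<close>

section \<open>Noncrossing words as pattern avoidance\<close>

lemma subseq_Cons_drop_iff:
  "subseq (x # xs) (drop k ys) \<longleftrightarrow>
     (\<exists>i. k \<le> i \<and> i < length ys \<and> ys ! i = x \<and> subseq xs (drop (Suc i) ys))"
proof (induct ys arbitrary: k)
  case Nil
  then show ?case by simp
next
  case (Cons y ys)
  show ?case
  proof (cases k)
    case 0
    have "subseq (x # xs) (y # ys) \<longleftrightarrow> (x = y \<and> subseq xs ys) \<or> subseq (x # xs) ys"
      by (cases "x = y") (auto dest: subseq_Cons')
    also have "subseq (x # xs) ys \<longleftrightarrow>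
        (\<exists>i. 0 \<le> i \<and> i < length ys \<and> ys ! i = x \<and> subseq xs (drop (Suc i) ys))"
      using Cons[of 0] by simp
    finally show ?thesis
      using 0 by (auto simp: less_Suc_eq_0_disj)
  next
    case (Suc k')
    show ?thesis
    proof
      assume "subseq (x # xs) (drop k (y # ys))"
      with Suc Cons[of k'] obtain i where
        "k' \<le> i" "i < length ys" "ys ! i = x" "subseq xs (drop (Suc i) ys)"
        by auto
      with Suc show "\<exists>i. k \<le> i \<and> i < length (y # ys) \<and> (y # ys) ! i = x \<and>
          subseq xs (drop (Suc i) (y # ys))"
        by (intro exI[of _ "Suc i"]) simp
    next
      assume "\<exists>i. k \<le> i \<and> i < length (y # ys) \<and> (y # ys) ! i = x \<and>
          subseq xs (drop (Suc i) (y # ys))"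
      then obtain i where i: "k \<le> i" "i < length (y # ys)" "(y # ys) ! i = x"
        "subseq xs (drop (Suc i) (y # ys))"
        by blast
      with Suc obtain i' where "i = Suc i'"
        by (cases i) auto
      with i Suc Cons[of k'] show "subseq (x # xs) (drop k (y # ys))"
        by auto
    qed
  qed
qed

lemma set_subseq: "subseq xs ys \<Longrightarrow> set xs \<subseteq> set ys"
  using list_emb_set[of "(=)" xs ys] by blast

lemma subseq_four_iff_nth:
  "subseq [p, q, r, s] w \<longleftrightarrow>
     (\<exists>a b c d. a < b \<and> b < c \<and> c < d \<and> d < length w \<and>
        w ! a = p \<and> w ! b = q \<and> w ! c = r \<and> w ! d = s)" (is "_ \<longleftrightarrow> ?R")
proof -
  have "subseq [p, q, r, s] w \<longleftrightarrow> subseq [p, q, r, s] (drop 0 w)"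
    by simp
  also have "\<dots> \<longleftrightarrow> (\<exists>a b c d. a < b \<and> b < c \<and> c < d \<and> d < length w \<and>
        a < length w \<and> b < length w \<and> c < length w \<and>
        w ! a = p \<and> w ! b = q \<and> w ! c = r \<and> w ! d = s)"
    unfolding subseq_Cons_drop_iff by (simp add: Suc_le_eq) blast
  also have "\<dots> \<longleftrightarrow> ?R"
  proof
    assume ?R
    then obtain a b c d where "a < b" "b < c" "c < d" "d < length w"
      "w ! a = p" "w ! b = q" "w ! c = r" "w ! d = s"
      by blast
    then show "\<exists>a b c d. a < b \<and> b < c \<and> c < d \<and> d < length w \<and>
        a < length w \<and> b < length w \<and> c < length w \<and>
        w ! a = p \<and> w ! b = q \<and> w ! c = r \<and> w ! d = s"
      by (intro exI[of _ a] exI[of _ b] exI[of _ c] exI[of _ d]) simp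
  qed blast
  finally show ?thesis .
qed

lemma noncrossing_iff_subseq:
  "noncrossing w \<longleftrightarrow> (\<forall>a b. subseq [a, b, a, b] w \<longrightarrow> a = b)"
proof
  assume nc: "noncrossing w"
  show "\<forall>a b. subseq [a, b, a, b] w \<longrightarrow> a = b"
  proof (intro allI impI)
    fix p q assume "subseq [p, q, p, q] w"
    then obtain a b c d where abcd: "a < b" "b < c" "c < d" "d < length w"
      "w ! a = p" "w ! b = q" "w ! c = p" "w ! d = q"
      unfolding subseq_four_iff_nth by blast
    show "p = q"
    proof (rule ccontr)
      assume "p \<noteq> q"
      with abcd have "\<exists>a b c d. a < b \<and> b < c \<and> c < d \<and> d < length w \<and>
          w ! a = w ! c \<and> w ! b = w ! d \<and> w ! a \<noteq> w ! b"
        by (intro exI[of _ a] exI[of _ b] exI[of _ c] exI[of _ d]) simp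
      with nc show False
        unfolding noncrossing_def by blast
    qed
  qed
next
  assume no_pattern: "\<forall>a b. subseq [a, b, a, b] w \<longrightarrow> a = b"
  show "noncrossing w"
    unfolding noncrossing_def
  proof
    assume "\<exists>a b c d. a < b \<and> b < c \<and> c < d \<and> d < length w \<and>
        w ! a = w ! c \<and> w ! b = w ! d \<and> w ! a \<noteq> w ! b"
    then obtain a b c d where abcd: "a < b" "b < c" "c < d" "d < length w"
      "w ! a = w ! c" "w ! b = w ! d" "w ! a \<noteq> w ! b"
      by blast
    then have "subseq [w ! a, w ! b, w ! a, w ! b] w"
      unfolding subseq_four_iff_nth
      by (intro exI[of _ a] exI[of _ b] exI[of _ c] exI[of _ d]) simp
    with no_pattern abcd(7) show False
      by blast
  qed
qed

lemma noncrossingD: "noncrossing w \<Longrightarrow> subseq [a, b, a, b] w \<Longrightarrow> a = b"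
  by (simp add: noncrossing_iff_subseq)

lemma noncrossing_subseq: "subseq u w \<Longrightarrow> noncrossing w \<Longrightarrow> noncrossing u"
  unfolding noncrossing_iff_subseq using subseq_order.trans by blast

lemma noncrossing_tl: "noncrossing (a # w) \<Longrightarrow> noncrossing w"
  by (erule noncrossing_subseq[rotated]) auto

lemma noncrossing_Cons:
  assumes "noncrossing u" and "a \<notin> set u \<or> hd u = a"
  shows "noncrossing (a # u)"
  unfolding noncrossing_iff_subseq
proof (intro allI impI)
  fix p q assume s: "subseq [p, q, p, q] (a # u)"
  show "p = q"
  proof (cases "p = a \<and> q \<noteq> a")
    case True
    with s have "subseq [q, a, q] u" by simp
    then have "a \<in> set u" using set_subseq by fastforce
    with assms(2) obtain u' where u: "u = a # u'" by (cases u) auto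
    with \<open>subseq [q, a, q] u\<close> True have "subseq [a, q, a, q] u" by simp
    with assms(1) True show ?thesis by (auto dest: noncrossingD)
  next
    case False
    with s have "subseq [p, q, p, q] u \<or> p = q" by (auto split: if_splits)
    with assms(1) show ?thesis by (auto dest: noncrossingD)
  qed
qed

lemma noncrossing_Cons2_not_subseq:
  assumes "noncrossing (a # b # r)" and "a \<noteq> b"
  shows "\<not> subseq [a, b] (b # r)"
proof
  assume "subseq [a, b] (b # r)"
  with assms(2) have "subseq [a, b, a, b] (a # b # r)" by simp
  with assms show False by (auto dest: noncrossingD)
qed

section \<open>Merging a letter into the letter 0\<close>

definition collapse :: "nat \<Rightarrow> nat \<Rightarrow> nat" where
  "collapse j a = (if a = j then 0 else a)"

lemma collapse_self [simp]: "collapse j j = 0"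
  and collapse_other [simp]: "a \<noteq> j \<Longrightarrow> collapse j a = a"
  by (simp_all add: collapse_def)

lemma collapse_eq_iff:
  "collapse j u = c \<longleftrightarrow> (if c = 0 then u = 0 \<or> u = j else u = c \<and> u \<noteq> j)"
  by (auto simp: collapse_def)

text \<open>\<open>replace_zeros j n\<close> relabels the first \<open>n\<close> zeros as \<open>j\<close>; on words in which every \<open>j\<close>
  precedes every \<open>0\<close> it undoes \<open>map (collapse j)\<close>.\<close>

fun replace_zeros :: "nat \<Rightarrow> nat \<Rightarrow> nat list \<Rightarrow> nat list" where
  "replace_zeros j 0 v = v"
| "replace_zeros j (Suc n) [] = []"
| "replace_zeros j (Suc n) (a # v) =
     (if a = 0 then j # replace_zeros j n v else a # replace_zeros j (Suc n) v)"

lemma map_collapse_notin: "j \<notin> set v \<Longrightarrow> map (collapse j) v = v"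
  by (induct v) (auto simp: collapse_def)

lemma map_collapse_replace_zeros:
  "j \<notin> set v \<Longrightarrow> map (collapse j) (replace_zeros j n v) = v"
  by (induct j n v rule: replace_zeros.induct) (auto simp: collapse_def map_collapse_notin)

lemma count_replace_zeros_relabelled:
  "j \<notin> set v \<Longrightarrow> j \<noteq> 0 \<Longrightarrow> count_list (replace_zeros j n v) j = min n (count_list v 0)"
  by (induct j n v rule: replace_zeros.induct) auto

lemma count_replace_zeros_zero:
  "j \<noteq> 0 \<Longrightarrow> count_list (replace_zeros j n v) 0 = count_list v 0 - n"
  by (induct j n v rule: replace_zeros.induct) auto

lemma count_replace_zeros_other:
  "a \<noteq> 0 \<Longrightarrow> a \<noteq> j \<Longrightarrow> count_list (replace_zeros j n v) a = count_list v a"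
  by (induct j n v rule: replace_zeros.induct) auto

lemma set_replace_zeros: "set (replace_zeros j n v) \<subseteq> insert j (set v)"
  by (induct j n v rule: replace_zeros.induct) auto

lemma replace_zeros_not_subseq:
  "j \<notin> set v \<Longrightarrow> j \<noteq> 0 \<Longrightarrow> \<not> subseq [0, j] (replace_zeros j n v)"
proof (induct j n v rule: replace_zeros.induct)
  case (1 j v)
  then show ?case using set_subseq by fastforce
qed auto

lemma replace_zeros_map_collapse:
  assumes "\<not> subseq [0, j] t" and "j \<noteq> 0"
  shows "replace_zeros j (count_list t j) (map (collapse j) t) = t"
  using assms
proof (induct t)
  case (Cons a t)
  consider "a = j" | "a = 0" | "a \<noteq> 0" "a \<noteq> j" by blast
  then show ?case
  proof cases
    case 2
    with Cons.prems have "j \<notin> set t" by (auto simp: subseq_singleton_left)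
    with 2 Cons.prems(2) show ?thesis by (simp add: map_collapse_notin)
  next
    case 3
    with Cons show ?thesis by (cases "count_list t j") (auto simp: collapse_def)
  qed (use Cons in \<open>auto simp: collapse_def\<close>)
qed simp

lemma count_map_collapse_zero:
  "j \<noteq> 0 \<Longrightarrow> count_list (map (collapse j) t) 0 = count_list t 0 + count_list t j"
  by (induct t) (auto simp: collapse_def)

lemma count_map_collapse_other:
  "a \<noteq> 0 \<Longrightarrow> a \<noteq> j \<Longrightarrow> count_list (map (collapse j) t) a = count_list t a"
  by (induct t) (auto simp: collapse_def)

lemma subseq_mapE:
  assumes "subseq xs (map f ys)"
  obtains zs where "subseq zs ys" "map f zs = xs"
  using assms
proof (induct ys arbitrary: xs thesis)
  case Nil
  then have "xs = []" by simp
  then show ?case by (intro Nil.prems(1)[of "[]"]) simp_all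
next
  case (Cons y ys)
  show ?case
  proof (cases "xs \<noteq> [] \<and> hd xs = f y")
    case True
    then obtain xs' where xs: "xs = f y # xs'" by (cases xs) auto
    with Cons.prems(2) have "subseq xs' (map f ys)" by simp
    then obtain zs where "subseq zs ys" "map f zs = xs'" by (rule Cons.hyps[rotated])
    with xs show ?thesis by (intro Cons.prems(1)[of "y # zs"]) simp_all
  next
    case False
    with Cons.prems(2) have "subseq xs (map f ys)" by (cases xs) auto
    then obtain zs where "subseq zs ys" "map f zs = xs" by (rule Cons.hyps[rotated])
    then show ?thesis by (intro Cons.prems(1)[of zs]) auto
  qed
qed

text \<open>In \<open>0 # j # r\<close> every \<open>j\<close> precedes every later \<open>0\<close>; hence a crossing of the letters \<open>0\<close>
  and \<open>j\<close> (merged into one) with a third letter can only be \<open>j b 0 b\<close> or \<open>b j b 0\<close>,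
  which give the crossings \<open>0 b 0 b\<close> and \<open>j b j b\<close> in the whole word.\<close>

lemma noncrossing_merged_crossing_outer:
  assumes nc: "noncrossing (0 # j # r)" and j: "j \<noteq> 0"
    and u: "u \<in> {0, j}" "u' \<in> {0, j}" and b: "b \<notin> {0, j}"
    and s: "subseq [u, b, u', b] (j # r)"
  shows False
proof -
  consider "u = u'" | "u = 0" "u' = j" | "u = j" "u' = 0"
    using u by blast
  then show False
  proof cases
    case 1
    with s have "subseq [u, b, u, b] (j # r)"
      by simp
    from noncrossingD[OF noncrossing_tl[OF nc] this] u b show False
      by simp
  next
    case 2
    from s have "subseq [0, j] (j # r)"
      by (rule subseq_order.trans[rotated]) (simp add: 2)
    with noncrossing_Cons2_not_subseq[OF nc] j show False by simp
  next
    case 3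
    from s have "subseq [b, 0, b] (j # r)"
      by (rule subseq_order.trans[rotated]) (use 3 b in simp)
    then have "subseq [0, b, 0, b] (0 # j # r)" by simp
    from noncrossingD[OF nc this] b show False by simp
  qed
qed

lemma noncrossing_merged_crossing_inner:
  assumes nc: "noncrossing (0 # j # r)" and j: "j \<noteq> 0"
    and u: "u \<in> {0, j}" "u' \<in> {0, j}" and a: "a \<notin> {0, j}"
    and s: "subseq [a, u, a, u'] (j # r)"
  shows False
proof -
  have nc_t: "noncrossing (j # r)"
    using nc by (rule noncrossing_tl)
  consider "u = u'" | "u = 0" "u' = j" | "u = j" "u' = 0"
    using u by blast
  then show False
  proof cases
    case 1
    with s have "subseq [a, u, a, u] (j # r)"
      by simp
    from noncrossingD[OF nc_t this] u a show False
      by simp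
  next
    case 2
    from s have "subseq [0, j] (j # r)"
      by (rule subseq_order.trans[rotated]) (simp add: 2)
    with noncrossing_Cons2_not_subseq[OF nc] j show False by simp
  next
    case 3
    with s a have "subseq [a, j, a] r"
      by (auto elim: subseq_order.trans[rotated])
    then have "subseq [j, a, j, a] (j # r)" by simp
    from noncrossingD[OF nc_t this] a show False by simp
  qed
qed

lemma noncrossing_map_collapse:
  assumes nc: "noncrossing (0 # j # r)" and j: "j \<noteq> 0"
  shows "noncrossing (map (collapse j) (j # r))"
  unfolding noncrossing_iff_subseq
proof (intro allI impI)
  fix a b assume "subseq [a, b, a, b] (map (collapse j) (j # r))"
  then obtain p q p' q' where s: "subseq [p, q, p', q'] (j # r)"
    and c: "collapse j p = a" "collapse j q = b" "collapse j p' = a" "collapse j q' = b"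
    by (elim subseq_mapE) (auto simp: map_eq_Cons_conv)
  show "a = b"
  proof (rule ccontr)
    assume ab: "a \<noteq> b"
    consider "a \<noteq> 0" "b \<noteq> 0" | "a = 0" "b \<noteq> 0" | "a \<noteq> 0" "b = 0"
      using ab by (cases "a = 0"; cases "b = 0") auto
    then show False
    proof cases
      case 1
      with c have "p = a" "p' = a" "q = b" "q' = b"
        by (auto simp: collapse_eq_iff)
      with s have "subseq [a, b, a, b] (j # r)"
        by simp
      from ab noncrossingD[OF noncrossing_tl[OF nc] this] show False ..
    next
      case 2
      with c have "p \<in> {0, j}" "p' \<in> {0, j}" "b \<notin> {0, j}" "q = b" "q' = b"
        by (auto simp: collapse_eq_iff)
      with s show False
        using noncrossing_merged_crossing_outer[OF nc j, of p p' b] by simp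
    next
      case 3
      with c have "q \<in> {0, j}" "q' \<in> {0, j}" "a \<notin> {0, j}" "p = a" "p' = a"
        by (auto simp: collapse_eq_iff)
      with s show False
        using noncrossing_merged_crossing_inner[OF nc j, of q q' a] by simp
    qed
  qed
qed

lemma noncrossing_replace_zeros:
  assumes v: "noncrossing v" "v \<noteq> []" "hd v = 0" and j: "j \<notin> set v" "j \<noteq> 0"
  shows "noncrossing (0 # replace_zeros j n v)"
  unfolding noncrossing_iff_subseq
proof (intro allI impI)
  fix a b assume s: "subseq [a, b, a, b] (0 # replace_zeros j n v)"
  define u where "u = replace_zeros j n v"
  have no_0j: "\<not> subseq [0, j] u"
    using replace_zeros_not_subseq[OF j] by (simp add: u_def)
  have "noncrossing (0 # v)"
    using noncrossing_Cons[OF v(1)] v(3) by simp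
  moreover have "subseq (map (collapse j) [a, b, a, b]) (map (collapse j) (0 # u))"
    using s by (intro subseq_map) (simp add: u_def)
  moreover have "map (collapse j) (0 # u) = 0 # v"
    using map_collapse_replace_zeros[OF j(1)] j(2) by (simp add: u_def)
  ultimately have "collapse j a = collapse j b"
    by (auto dest: noncrossingD)
  show "a = b"
  proof (rule ccontr)
    assume "a \<noteq> b"
    with \<open>collapse j a = collapse j b\<close> consider "a = 0" "b = j" | "a = j" "b = 0"
      by (auto simp: collapse_def split: if_splits)
    then have "subseq [0, j] u"
    proof cases
      case 1
      with s j(2) have "subseq [j, 0, j] u" by (simp add: u_def)
      then show ?thesis by (rule subseq_order.trans[rotated]) simp
    next
      case 2
      with s j(2) have "subseq [j, 0, j, 0] u" by (simp add: u_def)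
      then show ?thesis by (rule subseq_order.trans[rotated]) simp
    qed
    with no_0j show False ..
  qed
qed

section \<open>Counting noncrossing words that begin with 0\<close>

text \<open>The letter \<open>0\<close> is an extra letter (\<open>0 \<notin> S\<close>); prepending it identifies L-NC(x) with
  the case \<open>c = 1\<close>.\<close>

definition rooted_words :: "nat set \<Rightarrow> (nat \<Rightarrow> nat) \<Rightarrow> nat \<Rightarrow> nat list set" where
  "rooted_words S g c = {w. set w \<subseteq> insert 0 S \<and> count_list w 0 = c \<and>
     (\<forall>j\<in>S. count_list w j = g j) \<and> noncrossing w \<and> (w \<noteq> [] \<longrightarrow> hd w = 0)}"

lemma length_rooted_words:
  assumes "finite S" "0 \<notin> S" "w \<in> rooted_words S g c"
  shows "length w = c + sum g S"
proof -
  have "length w = sum (count_list w) (insert 0 S)"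
    using assms by (intro sum_count_set[symmetric]) (auto simp: rooted_words_def)
  also have "\<dots> = c + sum g S"
    using assms by (simp add: rooted_words_def)
  finally show ?thesis .
qed

lemma finite_rooted_words:
  assumes "finite S" "0 \<notin> S"
  shows "finite (rooted_words S g c)"
proof (rule finite_subset)
  show "rooted_words S g c \<subseteq> {w. set w \<subseteq> insert 0 S \<and> length w = c + sum g S}"
    using length_rooted_words[OF assms] by (auto simp: rooted_words_def)
  show "finite {w. set w \<subseteq> insert 0 S \<and> length w = c + sum g S}"
    using assms(1) by (intro finite_lists_length_eq) simp
qed

lemma rooted_words_empty: "rooted_words {} g c = {replicate c 0}"
proof (intro equalityI subsetI)
  fix w assume "w \<in> rooted_words {} g c"
  then have "set w \<subseteq> {0}" "count_list w 0 = c"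
    by (auto simp: rooted_words_def)
  then have "w = replicate (length w) 0" "length w = c"
    using sum_count_set[of w "{0}"] by (auto intro: replicate_eqI)
  then show "w \<in> {replicate c 0}" by simp
next
  have "count_list (replicate c 0) 0 = c"
    by (induct c) auto
  moreover have "noncrossing (replicate c (0::nat))"
    unfolding noncrossing_iff_subseq
  proof (intro allI impI)
    fix a b assume "subseq [a, b, a, b] (replicate c (0::nat))"
    from set_subseq[OF this] show "a = b" by (auto split: if_splits)
  qed
  ultimately show "w \<in> rooted_words {} g c" if "w \<in> {replicate c 0}" for w
    using that by (cases c) (auto simp: rooted_words_def)
qed

lemma rooted_words_zero:
  assumes "S \<noteq> {}" "\<forall>j\<in>S. 0 < g j"
  shows "rooted_words S g 0 = {}"
proof -
  have "w = []" if "w \<in> rooted_words S g 0" for w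
    using that by (cases w) (auto simp: rooted_words_def)
  moreover have "[] \<notin> rooted_words S g 0"
    using assms by (auto simp: rooted_words_def)
  ultimately show ?thesis by blast
qed

lemma Cons_zero_mem_rooted_words_iff:
  assumes "0 \<notin> S"
  shows "0 # t \<in> rooted_words S g c \<longleftrightarrow> set t \<subseteq> insert 0 S \<and> Suc (count_list t 0) = c \<and>
    (\<forall>j\<in>S. count_list t j = g j) \<and> noncrossing (0 # t)"
proof -
  have "count_list (0 # t) j = count_list t j" if "j \<in> S" for j
    using that assms by (cases "j = 0") simp_all
  then show ?thesis
    by (auto simp: rooted_words_def)
qed

lemma rooted_words_SucE:
  assumes "w \<in> rooted_words S g (Suc c)"
  obtains t where "w = 0 # t"
  using assms by (cases w) (auto simp: rooted_words_def)

lemma bij_betw_tl_rooted_words: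
  assumes "0 \<notin> S"
  shows "bij_betw tl {w \<in> rooted_words S g (Suc c). tl w = [] \<or> hd (tl w) = 0}
    (rooted_words S g c)"
proof (rule bij_betw_byWitness[where f' = "Cons 0"])
  let ?P = "{w \<in> rooted_words S g (Suc c). tl w = [] \<or> hd (tl w) = 0}"
  show "\<forall>w\<in>?P. 0 # tl w = w"
    by (auto elim: rooted_words_SucE)
  show "\<forall>v\<in>rooted_words S g c. tl (0 # v) = v"
    by simp
  show "tl ` ?P \<subseteq> rooted_words S g c"
  proof clarify
    fix w assume w: "w \<in> rooted_words S g (Suc c)" "tl w = [] \<or> hd (tl w) = 0"
    then obtain t where t: "w = 0 # t"
      by (elim rooted_words_SucE)
    with w(1) assms have "set t \<subseteq> insert 0 S" "count_list t 0 = c"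
      "\<forall>j\<in>S. count_list t j = g j" "noncrossing t"
      by (auto simp: Cons_zero_mem_rooted_words_iff dest: noncrossing_tl)
    with w(2) t show "tl w \<in> rooted_words S g c"
      by (auto simp: rooted_words_def)
  qed
  show "Cons 0 ` rooted_words S g c \<subseteq> ?P"
    using assms
    by (auto simp: Cons_zero_mem_rooted_words_iff rooted_words_def intro: noncrossing_Cons)
qed

lemma map_collapse_mem_rooted_words:
  assumes w: "0 # j # r \<in> rooted_words S g (Suc c)" and "j \<in> S" "0 \<notin> S"
  shows "map (collapse j) (j # r) \<in> rooted_words (S - {j}) g (c + g j)"
proof -
  let ?m = "map (collapse j) (j # r)"
  have j: "j \<noteq> 0"
    using assms(2,3) by (cases "j = 0") simp_all
  from w assms(3) have w': "set (j # r) \<subseteq> insert 0 S" "count_list (j # r) 0 = c"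
    "\<forall>k\<in>S. count_list (j # r) k = g k" "noncrossing (0 # j # r)"
    by (simp_all add: Cons_zero_mem_rooted_words_iff)
  have "set ?m \<subseteq> insert 0 (S - {j})"
    using w'(1) by (auto simp: collapse_def)
  moreover have "count_list ?m 0 = c + g j"
    using w'(2) bspec[OF w'(3) assms(2)] by (simp only: count_map_collapse_zero[OF j])
  moreover have "\<forall>k\<in>S - {j}. count_list ?m k = g k"
    using w'(3) assms(3) by (auto simp: count_map_collapse_other)
  moreover have "noncrossing ?m"
    using w'(4) j by (rule noncrossing_map_collapse)
  ultimately show ?thesis
    by (simp add: rooted_words_def)
qed

lemma replace_zeros_mem_rooted_words:
  assumes v: "v \<in> rooted_words (S - {j}) g (c + g j)" and "j \<in> S" "0 \<notin> S" "0 < g j"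
  shows "0 # replace_zeros j (g j) v \<in> rooted_words S g (Suc c)"
    and "\<exists>r. replace_zeros j (g j) v = j # r"
proof -
  let ?u = "replace_zeros j (g j) v"
  have j: "j \<noteq> 0"
    using assms(2,3) by (cases "j = 0") simp_all
  with v have j_v: "j \<notin> set v"
    by (auto simp: rooted_words_def)
  have v0: "count_list v 0 = c + g j"
    using v by (simp add: rooted_words_def)
  with assms(4) obtain v' where v': "v = 0 # v'"
    using v by (cases v) (auto simp: rooted_words_def)
  obtain n where n: "g j = Suc n"
    using assms(4) gr0_implies_Suc by blast
  show "\<exists>r. ?u = j # r"
    using v' n by simp
  have "set ?u \<subseteq> insert 0 S"
    using set_replace_zeros[of j "g j" v] v assms(2) by (auto simp: rooted_words_def)
  moreover have "Suc (count_list ?u 0) = Suc c"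
    using count_replace_zeros_zero[OF j] v0 by simp
  moreover have "count_list ?u k = g k" if "k \<in> S" for k
  proof (cases "k = j")
    case True
    with j j_v v0 show ?thesis by (simp add: count_replace_zeros_relabelled)
  next
    case False
    moreover from that assms(3) have "k \<noteq> 0"
      by (cases "k = 0") simp_all
    ultimately show ?thesis
      using that v by (simp add: count_replace_zeros_other rooted_words_def)
  qed
  moreover have "noncrossing (0 # ?u)"
    using v v' j j_v by (intro noncrossing_replace_zeros) (simp_all add: rooted_words_def)
  ultimately show "0 # ?u \<in> rooted_words S g (Suc c)"
    using assms(3) by (simp add: Cons_zero_mem_rooted_words_iff)
qed

lemma bij_betw_collapse_rooted_words:
  assumes "j \<in> S" "0 \<notin> S" "0 < g j"
  shows "bij_betw (\<lambda>w. map (collapse j) (tl w))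
    {w \<in> rooted_words S g (Suc c). tl w \<noteq> [] \<and> hd (tl w) = j}
    (rooted_words (S - {j}) g (c + g j))"
proof (rule bij_betw_byWitness[where f' = "\<lambda>v. 0 # replace_zeros j (g j) v"])
  let ?P = "{w \<in> rooted_words S g (Suc c). tl w \<noteq> [] \<and> hd (tl w) = j}"
  have shape: "\<exists>r. w = 0 # j # r" if "w \<in> ?P" for w
    using that by (auto elim!: rooted_words_SucE simp: neq_Nil_conv)
  have j: "j \<noteq> 0"
    using assms(1,2) by (cases "j = 0") simp_all
  show "\<forall>w\<in>?P. 0 # replace_zeros j (g j) (map (collapse j) (tl w)) = w"
  proof
    fix w assume w: "w \<in> ?P"
    then obtain r where r: "w = 0 # j # r" using shape by blast
    with w assms(2) have counts: "\<forall>k\<in>S. count_list (j # r) k = g k"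
      and nc: "noncrossing (0 # j # r)"
      by (simp_all add: Cons_zero_mem_rooted_words_iff)
    from counts assms(1) have "count_list (j # r) j = g j"
      by (rule bspec)
    with r j nc show "0 # replace_zeros j (g j) (map (collapse j) (tl w)) = w"
      using replace_zeros_map_collapse[of j "j # r"] noncrossing_Cons2_not_subseq[of 0 j r]
      by simp
  qed
  show "\<forall>v\<in>rooted_words (S - {j}) g (c + g j).
      map (collapse j) (tl (0 # replace_zeros j (g j) v)) = v"
  proof
    fix v assume "v \<in> rooted_words (S - {j}) g (c + g j)"
    with j have "j \<notin> set v"
      by (auto simp: rooted_words_def)
    then show "map (collapse j) (tl (0 # replace_zeros j (g j) v)) = v"
      by (simp add: map_collapse_replace_zeros)
  qed
  show "(\<lambda>w. map (collapse j) (tl w)) ` ?P \<subseteq> rooted_words (S - {j}) g (c + g j)"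
  proof (rule image_subsetI)
    fix w assume "w \<in> ?P"
    moreover from this obtain r where "w = 0 # j # r"
      using shape by blast
    ultimately show "map (collapse j) (tl w) \<in> rooted_words (S - {j}) g (c + g j)"
      using map_collapse_mem_rooted_words assms(1,2) by simp
  qed
  show "(\<lambda>v. 0 # replace_zeros j (g j) v) ` rooted_words (S - {j}) g (c + g j) \<subseteq> ?P"
  proof (rule image_subsetI)
    fix v assume "v \<in> rooted_words (S - {j}) g (c + g j)"
    from replace_zeros_mem_rooted_words[OF this assms]
    show "0 # replace_zeros j (g j) v \<in> ?P"
      by auto
  qed
qed

lemma card_rooted_words_Suc:
  assumes "finite S" "0 \<notin> S" "\<forall>j\<in>S. 0 < g j"
  shows "card (rooted_words S g (Suc c)) =
    card (rooted_words S g c) + (\<Sum>j\<in>S. card (rooted_words (S - {j}) g (c + g j)))"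
proof -
  let ?W = "rooted_words S g (Suc c)"
  define P0 where "P0 = {w \<in> ?W. tl w = [] \<or> hd (tl w) = 0}"
  define P where "P j = {w \<in> ?W. tl w \<noteq> [] \<and> hd (tl w) = j}" for j
  have split: "?W = P0 \<union> (\<Union>j\<in>S. P j)"
  proof (intro equalityI subsetI)
    fix w assume w: "w \<in> ?W"
    show "w \<in> P0 \<union> (\<Union>j\<in>S. P j)"
    proof (cases "tl w = [] \<or> hd (tl w) = 0")
      case False
      then have "hd (tl w) \<in> set w"
        by (cases w) auto
      with w False have "hd (tl w) \<in> S"
        by (auto simp: rooted_words_def)
      with w False show ?thesis
        by (auto simp: P_def)
    qed (use w in \<open>auto simp: P0_def\<close>)
  qed (auto simp: P0_def P_def)
  have "finite ?W"
    using assms(1,2) by (rule finite_rooted_words)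
  then have fin: "finite P0" "\<And>j. finite (P j)"
    by (auto simp: P0_def P_def)
  have "card ?W = card P0 + card (\<Union>j\<in>S. P j)"
    unfolding split using fin assms by (intro card_Un_disjoint) (auto simp: P0_def P_def)
  also have "card (\<Union>j\<in>S. P j) = (\<Sum>j\<in>S. card (P j))"
    using fin assms(1) by (intro card_UN_disjoint) (auto simp: P_def)
  also have "card P0 = card (rooted_words S g c)"
    unfolding P0_def using bij_betw_tl_rooted_words[OF assms(2)] by (rule bij_betw_same_card)
  also have "(\<Sum>j\<in>S. card (P j)) = (\<Sum>j\<in>S. card (rooted_words (S - {j}) g (c + g j)))"
    unfolding P_def using bij_betw_collapse_rooted_words assms(2,3)
    by (intro sum.cong refl bij_betw_same_card) blast
  finally show ?thesis .
qed

lemma falling_fact_0 [simp]: "falling_fact a 0 = 1"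
  by (simp add: falling_fact_def)

lemma falling_fact_Suc: "falling_fact a (Suc k) = falling_fact a k * (a - k)"
  by (simp add: falling_fact_def)

lemma falling_fact_Suc_Suc: "falling_fact (Suc a) (Suc k) = Suc a * falling_fact a k"
  unfolding falling_fact_def by (subst prod.lessThan_Suc_shift) simp

lemma falling_fact_recurrence:
  assumes "k < n"
  shows "Suc c * falling_fact (n + c) (Suc k) =
    c * falling_fact (n + c - 1) (Suc k) + ((k + 2) * c + n) * falling_fact (n + c - 1) k"
proof -
  obtain e where e: "n = Suc (k + e)"
    using assms less_iff_Suc_add by blast
  define f where "f = falling_fact (n + c - 1) k"
  have "falling_fact (n + c) (Suc k) = (n + c) * f"
    using falling_fact_Suc_Suc[of "n + c - 1" k] e by (simp add: f_def)
  moreover have "falling_fact (n + c - 1) (Suc k) = f * (e + c)"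
    using falling_fact_Suc[of "n + c - 1" k] e by (simp add: f_def)
  ultimately show ?thesis
    unfolding f_def[symmetric] by (simp add: e algebra_simps)
qed

lemma sum_falling_fact_remove:
  assumes "finite S" "card S = k + 2"
  shows "(\<Sum>j\<in>S. (c + g j) * falling_fact (sum g (S - {j}) + (c + g j) - 1) (card (S - {j}) - 1)) =
    ((k + 2) * c + sum g S) * falling_fact (sum g S + c - 1) k"
proof -
  have "(c + g j) * falling_fact (sum g (S - {j}) + (c + g j) - 1) (card (S - {j}) - 1) =
      (c + g j) * falling_fact (sum g S + c - 1) k" if "j \<in> S" for j
  proof -
    have "sum g (S - {j}) + (c + g j) = sum g S + c"
      using sum.remove[OF assms(1) that, of g] by simp
    moreover have "card (S - {j}) - 1 = k"
      using that assms by simp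
    ultimately show ?thesis
      by (simp only:)
  qed
  then have "(\<Sum>j\<in>S. (c + g j) * falling_fact (sum g (S - {j}) + (c + g j) - 1) (card (S - {j}) - 1)) =
      (\<Sum>j\<in>S. (c + g j) * falling_fact (sum g S + c - 1) k)"
    by (rule sum.cong[OF refl])
  also have "\<dots> = ((k + 2) * c + sum g S) * falling_fact (sum g S + c - 1) k"
    using assms(2) by (simp add: sum_distrib_right[symmetric] sum.distrib algebra_simps)
  finally show ?thesis .
qed

lemma card_rooted_words:
  assumes "finite S" "0 \<notin> S" "\<forall>j\<in>S. 0 < g j" "S \<noteq> {}"
  shows "card (rooted_words S g c) = c * falling_fact (sum g S + c - 1) (card S - 1)"
  using assms
proof (induction "card S" arbitrary: S c rule: less_induct)
  case less
  note S = less.prems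
  have IH: "card (rooted_words (S - {j}) g c') =
      c' * falling_fact (sum g (S - {j}) + c' - 1) (card (S - {j}) - 1)"
    if "j \<in> S" "S - {j} \<noteq> {}" for j c'
  proof -
    have "card (S - {j}) < card S"
      using S(1) that(1) by (rule card_Diff1_less)
    then show ?thesis
      using S that(2) by (intro less.hyps) auto
  qed
  show ?case
  proof (induction c)
    case 0
    with S show ?case by (simp add: rooted_words_zero)
  next
    case (Suc c)
    let ?N = "sum g S" and ?T = "\<lambda>j. card (rooted_words (S - {j}) g (c + g j))"
    have rec: "card (rooted_words S g (Suc c)) =
        c * falling_fact (?N + c - 1) (card S - 1) + (\<Sum>j\<in>S. ?T j)"
      using card_rooted_words_Suc[OF S(1-3)] Suc.IH by simp
    from S(1,4) have "card S \<noteq> 0"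
      by simp
    consider j where "S = {j}" | k where "card S = k + 2"
    proof (cases "card S = 1")
      case True
      then obtain j where "S = {j}"
        by (rule card_1_singletonE)
      then show ?thesis
        by (rule that(1))
    next
      case False
      with \<open>card S \<noteq> 0\<close> have "card S = (card S - 2) + 2"
        by simp
      then show ?thesis
        by (rule that(2))
    qed
    then show ?case
    proof cases
      case (1 j)
      with rec show ?thesis by (simp add: rooted_words_empty)
    next
      case (2 k)
      have "S - {j} \<noteq> {}" if "j \<in> S" for j
      proof -
        from S(1) that 2 have "card (S - {j}) \<noteq> 0"
          by simp
        then show ?thesis
          by (intro notI) simp
      qed
      with IH have "(\<Sum>j\<in>S. ?T j) =
          (\<Sum>j\<in>S. (c + g j) * falling_fact (sum g (S - {j}) + (c + g j) - 1) (card (S - {j}) - 1))"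
        by simp
      also have "\<dots> = ((k + 2) * c + ?N) * falling_fact (?N + c - 1) k"
        by (rule sum_falling_fact_remove[OF S(1) 2])
      finally have "card (rooted_words S g (Suc c)) =
          c * falling_fact (?N + c - 1) (Suc k) + ((k + 2) * c + ?N) * falling_fact (?N + c - 1) k"
        using rec 2 by simp
      also have "\<dots> = Suc c * falling_fact (?N + c) (Suc k)"
      proof (rule falling_fact_recurrence[symmetric])
        have "card S \<le> ?N"
          using S(3) sum_mono[of S "\<lambda>_. 1" g] by (simp add: Suc_le_eq)
        with 2 show "k < ?N" by simp
      qed
      finally show ?thesis
        using 2 by simp
    qed
  qed
qed

lemma sum_list_eq_sum_nth: "sum_list x = (\<Sum>i = 1..length x. x ! (i - 1))"
proof -
  have "sum_list x = (\<Sum>i = 0..<length x. x ! i)"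
    by (rule sum_list_sum_nth)
  also have "\<dots> = (\<Sum>i\<in>Suc ` {0..<length x}. x ! (i - 1))"
    by (subst sum.reindex) auto
  also have "Suc ` {0..<length x} = {1..length x}"
    by (simp add: image_Suc_atLeastLessThan atLeastLessThanSuc_atLeastAtMost)
  finally show ?thesis .
qed

lemma finite_LNC: "finite (LNC x)"
proof (rule finite_subset)
  show "LNC x \<subseteq> {w. set w \<subseteq> {1..length x} \<and> length w = sum_list x}"
    by (auto simp: LNC_def)
qed (simp add: finite_lists_length_eq)

lemma bij_betw_Cons_zero_LNC:
  "bij_betw (Cons 0) (LNC x) (rooted_words {1..length x} (\<lambda>i. x ! (i - 1)) 1)"
proof (rule bij_betw_byWitness[where f' = tl])
  let ?S = "{1..length x}" and ?g = "\<lambda>i. x ! (i - 1)"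
  have S0: "0 \<notin> ?S" by simp
  show "\<forall>w\<in>LNC x. tl (0 # w) = w"
    by simp
  show "\<forall>v\<in>rooted_words ?S ?g 1. 0 # tl v = v"
    by (auto elim: rooted_words_SucE[where c = 0, simplified])
  show "Cons 0 ` LNC x \<subseteq> rooted_words ?S ?g 1"
  proof (rule image_subsetI)
    fix w assume w: "w \<in> LNC x"
    then have "0 \<notin> set w"
      by (auto simp: LNC_def)
    with w show "0 # w \<in> rooted_words ?S ?g 1"
      unfolding Cons_zero_mem_rooted_words_iff[OF S0]
      by (auto simp: LNC_def intro: noncrossing_Cons)
  qed
  show "tl ` rooted_words ?S ?g 1 \<subseteq> LNC x"
  proof (rule image_subsetI)
    fix v assume v: "v \<in> rooted_words ?S ?g 1"
    then obtain t where t: "v = 0 # t"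
      by (auto elim: rooted_words_SucE[where c = 0, simplified])
    with v have "0 # t \<in> rooted_words ?S ?g 1"
      by simp
    then have "set t \<subseteq> insert 0 ?S" "count_list t 0 = 0"
      and counts: "\<forall>i\<in>?S. count_list t i = ?g i" and "noncrossing t"
      unfolding Cons_zero_mem_rooted_words_iff[OF S0] by (auto dest: noncrossing_tl)
    moreover from calculation have "set t \<subseteq> ?S"
      by (auto simp: count_list_0_iff)
    moreover from this have "length t = sum_list x"
      using counts by (simp add: sum_count_set[symmetric] sum_list_eq_sum_nth)
    ultimately show "tl v \<in> LNC x"
      using t by (simp add: LNC_def)
  qed
qed

lemma card_LNC:
  assumes "\<forall>i<length x. 0 < x ! i" and "x \<noteq> []"
  shows "card (LNC x) = falling_fact (sum_list x) (length x - 1)"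
proof -
  have "card (LNC x) = card (rooted_words {1..length x} (\<lambda>i. x ! (i - 1)) 1)"
    by (rule bij_betw_same_card[OF bij_betw_Cons_zero_LNC])
  also have "\<dots> = falling_fact (sum_list x) (length x - 1)"
    using assms by (subst card_rooted_words) (auto simp: sum_list_eq_sum_nth Suc_le_eq)
  finally show ?thesis .
qed

section \<open>Rotation classes\<close>

lemma noncrossing_rotate1:
  assumes "noncrossing w"
  shows "noncrossing (rotate1 w)"
proof (cases w)
  case Nil
  with assms show ?thesis by simp
next
  case (Cons a t)
  show ?thesis
    unfolding noncrossing_iff_subseq
  proof (intro allI impI)
    fix p q assume "subseq [p, q, p, q] (rotate1 w)"
    with Cons have "subseq [p, q, p, q] (t @ [a])" by simp
    then obtain xs ys where e: "[p, q, p, q] = xs @ ys"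
      and xs: "subseq xs t" and ys: "subseq ys [a]"
      by (rule subseq_appendE)
    from list_emb_length[OF ys] consider "ys = []" | y where "ys = [y]"
      by (cases ys) auto
    then show "p = q"
    proof cases
      case 1
      with e xs Cons assms show ?thesis by (auto dest: noncrossingD)
    next
      case 2
      with e ys have "xs = [p, q, p]" "q = a" by (auto split: if_splits)
      with xs Cons have "subseq [q, p, q, p] w" by simp
      with assms show ?thesis by (auto dest: noncrossingD)
    qed
  qed
qed

lemma noncrossing_rotate: "noncrossing w \<Longrightarrow> noncrossing (rotate k w)"
  by (induct k) (simp_all add: noncrossing_rotate1)

lemma subseq_pair_cases:
  assumes "a \<in> set z" "b \<in> set z" "a \<noteq> b"
  shows "subseq [a, b] z \<or> subseq [b, a] z"
proof -
  from assms(1) obtain z1 z2 where z: "z = z1 @ a # z2"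
    by (meson split_list)
  with assms(2,3) have "b \<in> set z1 \<or> b \<in> set z2" by auto
  then show ?thesis
  proof
    assume "b \<in> set z1"
    then have "subseq ([b] @ [a]) (z1 @ a # z2)"
      by (intro list_emb_append_mono) (auto simp: subseq_singleton_left)
    with z show ?thesis by simp
  next
    assume "b \<in> set z2"
    then have "subseq ([] @ a # [b]) (z1 @ a # z2)"
      by (intro list_emb_append_mono) (auto simp: subseq_singleton_left)
    with z show ?thesis by simp
  qed
qed

lemma noncrossing_power:
  assumes "noncrossing (concat (replicate n z))" "1 < n" "a \<in> set z" "b \<in> set z"
  shows "a = b"
proof (rule ccontr)
  assume "a \<noteq> b"
  with subseq_pair_cases[OF assms(3,4)] obtain p q where pq: "subseq [p, q] z" "p \<noteq> q"
    by blast
  define n' where "n' = n - 2"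
  with assms(2) have "n = Suc (Suc n')"
    by simp
  then have n: "concat (replicate n z) = (z @ z) @ concat (replicate n' z)"
    by simp
  have "subseq ([p, q] @ [p, q]) ((z @ z) @ concat (replicate n' z))"
    using list_emb_append_mono[OF pq(1) pq(1)] by (rule subseq_rev_drop_many)
  with n assms(1) have "p = q"
    by (intro noncrossingD[of _ p q]) simp_all
  with pq(2) show False ..
qed

definition rotations :: "'a list \<Rightarrow> 'a list set" where
  "rotations w = range (\<lambda>k. rotate k w)"

lemma LNCN_eq_rotations: "LNCN x = rotations ` LNC x"
  by (simp add: LNCN_def rotations_def full_SetCompr_eq)

lemma rotate_mem_rotations: "rotate k w \<in> rotations w"
  by (simp add: rotations_def)

lemma self_mem_rotations: "w \<in> rotations w"
  using rotate_mem_rotations[of 0 w] by simp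

lemma rotations_subset: "v \<in> rotations w \<Longrightarrow> rotations v \<subseteq> rotations w"
  by (auto simp: rotations_def rotate_rotate)

lemma mem_rotations_sym:
  assumes "v \<in> rotations w"
  shows "w \<in> rotations v"
proof -
  from assms obtain i where v: "v = rotate i w"
    by (auto simp: rotations_def)
  have "rotate (length w * i - i) v = rotate (length w * i) w"
  proof (cases "w = []")
    case False
    then have "i \<le> length w * i"
      by (simp add: Suc_le_eq)
    then show ?thesis
      by (simp add: v rotate_rotate)
  qed (simp add: v)
  also have "\<dots> = w"
    by simp
  finally show ?thesis
    using rotate_mem_rotations[of "length w * i - i" v] by simp
qed

lemma rotations_eq: "v \<in> rotations w \<Longrightarrow> rotations v = rotations w"
  using rotations_subset mem_rotations_sym by blast

lemma card_rotations:
  assumes "w \<noteq> []" and aperiodic: "\<And>d. 0 < d \<Longrightarrow> d < length w \<Longrightarrow> rotate d w \<noteq> w"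
  shows "card (rotations w) = length w"
proof -
  have "rotations w = (\<lambda>k. rotate k w) ` {..<length w}"
    unfolding rotations_def using assms(1)
    by (auto simp: image_iff intro: exI[of _ "k mod length w" for k] rotate_conv_mod)
  moreover have "inj_on (\<lambda>k. rotate k w) {..<length w}"
  proof (rule linorder_inj_onI')
    fix i j assume ij: "i \<in> {..<length w}" "j \<in> {..<length w}" "i < j"
    show "rotate i w \<noteq> rotate j w"
    proof
      assume eq: "rotate i w = rotate j w"
      have "rotate (j - i) w = rotate (j - i) (rotate (length w) w)"
        by simp
      also have "\<dots> = rotate ((j - i) + length w) w"
        by (simp only: rotate_rotate)
      also have "(j - i) + length w = (length w - i) + j"
        using ij by simp
      also have "rotate ((length w - i) + j) w = rotate (length w - i) (rotate i w)"
        by (simp only: eq rotate_rotate)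
      also have "\<dots> = rotate (length w) w"
        using ij by (simp add: rotate_rotate)
      finally have "rotate (j - i) w = w"
        by simp
      moreover have "j - i < length w"
        using ij by simp
      ultimately show False
        using aperiodic[of "j - i"] ij by simp
    qed
  qed
  ultimately show ?thesis
    by (simp add: card_image)
qed

lemma card_eq_mult_card_rotations:
  assumes "finite A" and closed: "\<And>w k. w \<in> A \<Longrightarrow> rotate k w \<in> A"
    and card: "\<And>w. w \<in> A \<Longrightarrow> card (rotations w) = n"
  shows "card A = n * card (rotations ` A)"
proof -
  have "\<Union> (rotations ` A) = A"
  proof
    show "\<Union> (rotations ` A) \<subseteq> A"
      using closed by (auto simp: rotations_def)
    show "A \<subseteq> \<Union> (rotations ` A)"
      using self_mem_rotations by blast
  qed
  moreover have "n * card (rotations ` A) = card (\<Union> (rotations ` A))"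
  proof (rule card_partition)
    show "finite (rotations ` A)" "finite (\<Union> (rotations ` A))"
      using assms(1) calculation by simp_all
    show "\<And>c. c \<in> rotations ` A \<Longrightarrow> card c = n"
      using card by blast
    show "\<And>c1 c2. c1 \<in> rotations ` A \<Longrightarrow> c2 \<in> rotations ` A \<Longrightarrow> c1 \<noteq> c2 \<Longrightarrow> c1 \<inter> c2 = {}"
      using rotations_eq by blast
  qed
  ultimately show ?thesis
    by simp
qed

lemma rotate_eq_self_power:
  assumes "0 < d" "d < length w" "rotate d w = w"
  obtains n z where "1 < n" "w = concat (replicate n z)"
proof -
  have "take d w @ drop d w = drop d w @ take d w"
    using assms by (simp add: rotate_drop_take)
  moreover have "take d w \<noteq> []" "drop d w \<noteq> []"
    using assms(1,2) by auto
  ultimately obtain n z where "1 < n" "concat (replicate n z) = take d w @ drop d w"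
    using comm_append_is_replicate by metis
  then show ?thesis
    by (intro that[of n z]) simp_all
qed

lemma noncrossing_rotate_neq:
  assumes "noncrossing w" "a \<in> set w" "b \<in> set w" "a \<noteq> b" "0 < d" "d < length w"
  shows "rotate d w \<noteq> w"
proof
  assume "rotate d w = w"
  with assms(5,6) obtain n z where n: "1 < n" "w = concat (replicate n z)"
    by (rule rotate_eq_self_power)
  with assms(2,3) have "a \<in> set z" "b \<in> set z"
    by auto
  with n assms(1) have "a = b"
    by (intro noncrossing_power[of n z]) simp_all
  with assms(4) show False ..
qed

lemma count_list_rotate: "count_list (rotate k w) a = count_list w a"
proof -
  have "count_list (rotate1 v) a = count_list v a" for v :: "'a list"
    by (cases v) auto
  then show ?thesis
    by (induct k) simp_all
qed

lemma rotate_mem_LNC: "w \<in> LNC x \<Longrightarrow> rotate k w \<in> LNC x"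
  by (simp add: LNC_def count_list_rotate noncrossing_rotate)

lemma card_rotations_LNC:
  assumes w: "w \<in> LNC x" and "2 \<le> length x" and "\<forall>i<length x. 0 < x ! i"
  shows "card (rotations w) = sum_list x"
proof -
  have "0 < length x" "1 < length x"
    using assms(2) by linarith+
  with assms(3) have "0 < x ! 0" "0 < x ! 1"
    by blast+
  moreover have "count_list w 1 = x ! 0" "count_list w 2 = x ! 1"
    using w assms(2) by (auto simp: LNC_def)
  ultimately have "0 < count_list w 1" "0 < count_list w 2"
    by simp_all
  then have "1 \<in> set w" "2 \<in> set w"
    by (metis count_notin less_not_refl)+
  moreover have "noncrossing w"
    using w by (simp add: LNC_def)
  ultimately have "card (rotations w) = length w"
    by (intro card_rotations noncrossing_rotate_neq[of w 1 2]) auto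
  with w show ?thesis
    by (simp add: LNC_def)
qed

theorem mainTheorem3:
  fixes x :: "nat list"
  assumes "length x \<ge> 2"
    and "\<forall>i < length x. x ! i > 0"
    and "card {i. i < length x \<and> x ! i = 1} \<le> 1"
  shows "card (LNCN x) = falling_fact (sum_list x - 1) (length x - 2)"
proof -
  let ?N = "sum_list x"
  have "0 < length x"
    using assms(1) by linarith
  then have "0 < x ! 0" "x ! 0 \<le> ?N"
    using assms(2) by (simp_all add: elem_le_sum_list)
  then have "0 < ?N"
    by linarith
  have "?N * card (LNCN x) = card (LNC x)"
    unfolding LNCN_eq_rotations
    using finite_LNC rotate_mem_LNC card_rotations_LNC[OF _ assms(1,2)]
    by (rule card_eq_mult_card_rotations[symmetric])
  also have "\<dots> = falling_fact ?N (length x - 1)"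
    using assms(1,2) by (intro card_LNC) auto
  also have "\<dots> = ?N * falling_fact (?N - 1) (length x - 2)"
    using falling_fact_Suc_Suc[of "?N - 1" "length x - 2"] assms(1) \<open>0 < ?N\<close>
    by (simp add: Suc_diff_Suc numeral_2_eq_2)
  finally show ?thesis
    using \<open>0 < ?N\<close> mult_left_cancel[of ?N] by (metis less_not_refl2)
qed

end
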